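(* Let $\mathcal{P}_1,\dots,\mathcal{P}_k$ be finite posets with $p_j=|\mathcal{P}_j|$, $r\ge1$, and $\mathbf{T}\in\mathbb{R}^{p_1\times\cdots\times p_k}$. Each of the following optimization problems has a minimizer: (1) if all entries of $\mathbf{T}$ are in $\mathbb{R}$: minimize $\Vert\mathbf{T}-\boldsymbol\theta\Vert_F^2$ over $\boldsymbol\theta\in\mathcal{N}_{\le r}$; (2) if all entries of $\mathbf{T}$ are in $\mathbb{N}=\{0,1,2,\dots\}$ and sum to $n$: minimize $-\sum_{i_1,\dots,i_k}T_{i_1\dots i_k}\log(\theta_{i_1\dots i_k})$ over $\boldsymbol\theta\in\mathcal{N}_{\le r}\cap\Delta$, where $\Delta$ is the set of nonnegative tensors with entries summing to one; (3) if all entries of $\mathbf{T}$ are in $\mathbb{N}$: minimize $\sum_{i_1,\dots,i_k}\big(\theta_{i_1\dots i_k}-T_{i_1\dots i_k}\log(\theta_{i_1\dots i_k})\big)$ over $\boldsymbol\theta\in\mathcal{N}_{\le r}$; (4) if all entries of $\mathbf{T}$ are in $(0,\infty)$: minimize $\sum_{i_1,\dots,i_k}\big(\log(\theta_{i_1\dots i_k})+T_{i_1\dots i_k}/\theta_{i_1\dots i_k}\big)$ over $\boldsymbol\theta\in\mathcal{N}_{\le r}$. Here, in (2) and (3) the term $T_{i_1\dots i_k}\log(\theta_{i_1\dots i_k})$ is omitted whenever $T_{i_1\dots i_k}=0$, and objectives are extended to take values in $\mathbb{R}\cup\{\infty\}$ by setting $-T\log(0):=\infty$ and $T/0:=\infty$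 (and $\log 0$ terms so that the objective in (4) is $+\infty$ when some $\theta_{i_1\dots i_k}=0$).
   Context: For a finite poset $\mathcal{Q}$, the order cone $\mathcal{C}(\mathcal{Q})$ is the set of $\mathbf{f}\in\mathbb{R}^{\mathcal{Q}}$ with $f_x\ge0$ for all $x$ and $f_x\le f_y$ whenever $x\preceq y$. $\mathcal{N}_{\le r}$ is the set of tensors of the form $\sum_{i=1}^r\otimes_{j=1}^k\mathbf{v}^{(ij)}$ with $\mathbf{v}^{(ij)}\in\mathcal{C}(\mathcal{P}_j)$ (these have nonnegative entries). $\Vert\cdot\Vert_F$ is the Frobenius norm. These four problems are the maximum likelihood problems for independent Gaussian, multinomial, independent Poisson and independent exponential models with mean tensor $\boldsymbol\theta$. *)

theory Defs
  imports "HOL-Analysis.Analysis" "HOL-Library.Extended_Real"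
begin

definition order_cone :: "'a set \<Rightarrow> 'a rel \<Rightarrow> ('a \<Rightarrow> real) set" where
  "order_cone A R = {f. (\<forall>x\<in>A. 0 \<le> f x) \<and> (\<forall>x\<in>A. \<forall>y\<in>A. (x, y) \<in> R \<longrightarrow> f x \<le> f y)}"

definition tensor_idx :: "nat \<Rightarrow> (nat \<Rightarrow> 'a set) \<Rightarrow> (nat \<Rightarrow> 'a) set" where
  "tensor_idx k P = PiE {..<k} P"

text \<open>N_{<= r}: sums of r outer products of order-cone vectors (only values on the index set matter).\<close>
definition nonneg_rank_le ::
  "nat \<Rightarrow> (nat \<Rightarrow> 'a set) \<Rightarrow> (nat \<Rightarrow> 'a rel) \<Rightarrow> nat \<Rightarrow> ((nat \<Rightarrow> 'a) \<Rightarrow> real) set" where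
  "nonneg_rank_le k P R r = {\<theta>. \<exists>v :: nat \<Rightarrow> nat \<Rightarrow> 'a \<Rightarrow> real.
      (\<forall>i<r. \<forall>j<k. v i j \<in> order_cone (P j) (R j)) \<and>
      (\<forall>x\<in>tensor_idx k P. \<theta> x = (\<Sum>i<r. \<Prod>j<k. v i j (x j)))}"

definition prob_simplex :: "nat \<Rightarrow> (nat \<Rightarrow> 'a set) \<Rightarrow> ((nat \<Rightarrow> 'a) \<Rightarrow> real) set" where
  "prob_simplex k P = {\<theta>. (\<forall>x\<in>tensor_idx k P. 0 \<le> \<theta> x) \<and> (\<Sum>x\<in>tensor_idx k P. \<theta> x) = 1}"

definition has_minimizer :: "('b \<Rightarrow> ereal) \<Rightarrow> 'b set \<Rightarrow> bool" where
  "has_minimizer F S \<longleftrightarrow> (\<exists>\<theta>\<in>S. \<forall>\<theta>'\<in>S. F \<theta> \<le> F \<theta>')"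

definition gauss_obj :: "nat \<Rightarrow> (nat \<Rightarrow> 'a set) \<Rightarrow> ((nat \<Rightarrow> 'a) \<Rightarrow> real) \<Rightarrow> ((nat \<Rightarrow> 'a) \<Rightarrow> real) \<Rightarrow> ereal" where
  "gauss_obj k P T \<theta> = ereal (\<Sum>x\<in>tensor_idx k P. (T x - \<theta> x)\<^sup>2)"

definition neg_T_log :: "real \<Rightarrow> real \<Rightarrow> ereal" where
  "neg_T_log t th = (if t = 0 then 0 else if th = 0 then \<infinity> else ereal (- t * ln th))"

definition multinom_obj :: "nat \<Rightarrow> (nat \<Rightarrow> 'a set) \<Rightarrow> ((nat \<Rightarrow> 'a) \<Rightarrow> real) \<Rightarrow> ((nat \<Rightarrow> 'a) \<Rightarrow> real) \<Rightarrow> ereal" where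
  "multinom_obj k P T \<theta> = (\<Sum>x\<in>tensor_idx k P. neg_T_log (T x) (\<theta> x))"

definition poisson_obj :: "nat \<Rightarrow> (nat \<Rightarrow> 'a set) \<Rightarrow> ((nat \<Rightarrow> 'a) \<Rightarrow> real) \<Rightarrow> ((nat \<Rightarrow> 'a) \<Rightarrow> real) \<Rightarrow> ereal" where
  "poisson_obj k P T \<theta> = (\<Sum>x\<in>tensor_idx k P. ereal (\<theta> x) + neg_T_log (T x) (\<theta> x))"

definition expon_obj :: "nat \<Rightarrow> (nat \<Rightarrow> 'a set) \<Rightarrow> ((nat \<Rightarrow> 'a) \<Rightarrow> real) \<Rightarrow> ((nat \<Rightarrow> 'a) \<Rightarrow> real) \<Rightarrow> ereal" where
  "expon_obj k P T \<theta> = (\<Sum>x\<in>tensor_idx k P.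
      (if \<theta> x = 0 then \<infinity> else ereal (ln (\<theta> x) + T x / \<theta> x)))"

end

theory Submission
  imports Defs "HOL-Real_Asymp.Real_Asymp"
begin

(* Each objective is a finite sum of entrywise terms that are continuous from [0, \<infinity>) into
   (-\<infinity>, \<infinity>], hence continuous on every compact set of tensors.  The tensors of N_{<= r} whose
   entries are bounded by M form a continuous image of a compact set of factors: scaling the
   factors of each rank-one term so that all but the first have maximum 1 bounds the first one by
   the largest entry of that term, hence by M.  Finally each objective is coercive on N_{<= r}:
   once some entry exceeds a suitable M, a constant tensor does at least as well. *)

lemma has_minimizer_of_compact_parametrization:
  fixes F :: "'t \<Rightarrow> ereal" and \<Phi> :: "'w::topological_space \<Rightarrow> 't"
  assumes "compact K" "K \<noteq> {}" "continuous_on K (\<lambda>w. F (\<Phi> w))" "\<Phi> ` K \<subseteq> S"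
    and "\<And>\<theta>. \<theta> \<in> S \<Longrightarrow> \<exists>w\<in>K. F (\<Phi> w) \<le> F \<theta>"
  shows "has_minimizer F S"
proof -
  obtain w0 where w0: "w0 \<in> K" "\<And>w. w \<in> K \<Longrightarrow> F (\<Phi> w0) \<le> F (\<Phi> w)"
    using continuous_attains_inf[OF assms(1-3)] by blast
  show ?thesis
    unfolding has_minimizer_def
  proof (intro bexI ballI)
    show "\<Phi> w0 \<in> S"
      using w0(1) assms(4) by blast
    fix \<theta> assume "\<theta> \<in> S"
    then obtain w where "w \<in> K" "F (\<Phi> w) \<le> F \<theta>"
      using assms(5) by blast
    then show "F (\<Phi> w0) \<le> F \<theta>"
      using w0(2) order_trans by blast
  qed
qed

lemma sum_ereal_neq_MInfty:
  fixes f :: "'i \<Rightarrow> ereal"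
  assumes "\<And>i. i \<in> I \<Longrightarrow> f i \<noteq> -\<infinity>"
  shows "sum f I \<noteq> -\<infinity>"
  using assms by (induction I rule: infinite_finite_induct) auto

lemma continuous_on_sum_ereal:
  fixes f :: "'i \<Rightarrow> 'w::topological_space \<Rightarrow> ereal"
  assumes "\<And>i. i \<in> I \<Longrightarrow> continuous_on K (f i)"
    and "\<And>i w. i \<in> I \<Longrightarrow> w \<in> K \<Longrightarrow> f i w \<noteq> -\<infinity>"
  shows "continuous_on K (\<lambda>w. \<Sum>i\<in>I. f i w)"
  using assms
proof (induction I rule: infinite_finite_induct)
  case (insert i I)
  show ?case
    unfolding sum.insert[OF insert(1,2)] continuous_on_def
  proof
    fix w assume w: "w \<in> K"
    have "f i w \<noteq> -\<infinity>"
      using insert.prems(2) w by simp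
    moreover have "(\<Sum>i\<in>I. f i w) \<noteq> -\<infinity>"
      using insert.prems(2) w by (intro sum_ereal_neq_MInfty) simp
    ultimately show "((\<lambda>w. f i w + (\<Sum>i\<in>I. f i w)) \<longlongrightarrow> f i w + (\<Sum>i\<in>I. f i w)) (at w within K)"
      using insert w by (intro tendsto_add_ereal_general) (auto simp: continuous_on_def)
  qed
qed auto

lemma continuous_on_extend_PInfty_at_0:
  fixes f :: "real \<Rightarrow> real"
  assumes cont: "continuous_on {0<..} f" and lim: "filterlim f at_top (at_right 0)"
  shows "continuous_on {0..} (\<lambda>t. if t = 0 then \<infinity> else ereal (f t))"
  unfolding continuous_on_def
proof
  fix t :: real assume "t \<in> {0..}"
  then consider "t = 0" | "t > 0" by fastforce
  then show "((\<lambda>t. if t = 0 then \<infinity> else ereal (f t)) \<longlongrightarrow>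
      (if t = 0 then \<infinity> else ereal (f t))) (at t within {0..})"
  proof cases
    case 1
    have "((\<lambda>z. ereal (f z)) \<longlongrightarrow> \<infinity>) (at_right 0)"
      using lim by (simp add: tendsto_PInfty_eq_at_top)
    then have "((\<lambda>z. if z = 0 then \<infinity> else ereal (f z)) \<longlongrightarrow> \<infinity>) (at_right 0)"
      by (rule tendsto_cong[THEN iffD1, rotated]) (auto simp: eventually_at_filter)
    then show ?thesis
      using 1 by (simp add: at_within_Ici_at_right)
  next
    case 2
    have "isCont f t"
      using cont 2 by (simp add: continuous_on_eq_continuous_at)
    then have "(f \<longlongrightarrow> f t) (at t within {0..})"
      using isCont_def tendsto_within_subset by blast
    then have "((\<lambda>z. ereal (f z)) \<longlongrightarrow> ereal (f t)) (at t within {0..})"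
      by (rule tendsto_ereal)
    moreover have "eventually (\<lambda>z. z \<noteq> 0) (at t within {0..})"
    proof -
      have "eventually (\<lambda>z. z \<in> {0<..}) (at t)"
        using 2 by (intro eventually_at_in_open') auto
      then show ?thesis
        by (auto simp: eventually_at_filter elim: eventually_mono)
    qed
    ultimately have "((\<lambda>z. if z = 0 then \<infinity> else ereal (f z)) \<longlongrightarrow> ereal (f t)) (at t within {0..})"
      by (elim tendsto_cong[THEN iffD1, rotated] eventually_mono) simp
    then show ?thesis
      using 2 by simp
  qed
qed

lemma continuous_on_neg_T_log:
  assumes "0 \<le> c"
  shows "continuous_on {0..} (neg_T_log c)"
proof (cases "c = 0")
  case True
  then have "neg_T_log c = (\<lambda>_. 0)"
    by (auto simp: neg_T_log_def)
  then show ?thesis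
    by simp
next
  case False
  then have "neg_T_log c = (\<lambda>t. if t = 0 then \<infinity> else ereal (- c * ln t))"
    by (auto simp: neg_T_log_def)
  moreover have "continuous_on {0<..} (\<lambda>t. - c * ln t)"
    by (intro continuous_intros) auto
  moreover have "filterlim (\<lambda>t. - c * ln t) at_top (at_right 0)"
    using assms False by real_asymp
  ultimately show ?thesis
    by (simp add: continuous_on_extend_PInfty_at_0)
qed

lemma continuous_on_poisson_term:
  assumes "0 \<le> c"
  shows "continuous_on {0..} (\<lambda>t. ereal t + neg_T_log c t)"
  unfolding continuous_on_def
proof
  fix t :: real assume t: "t \<in> {0..}"
  have "(neg_T_log c \<longlongrightarrow> neg_T_log c t) (at t within {0..})"
    using continuous_on_neg_T_log[OF assms] t by (simp add: continuous_on_def)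
  then show "((\<lambda>t. ereal t + neg_T_log c t) \<longlongrightarrow> ereal t + neg_T_log c t) (at t within {0..})"
    by (intro tendsto_add_ereal_general2 tendsto_intros) simp
qed

lemma continuous_on_expon_term:
  assumes "0 < c"
  shows "continuous_on {0..} (\<lambda>t. if t = 0 then \<infinity> else ereal (ln t + c / t))"
proof (rule continuous_on_extend_PInfty_at_0)
  show "continuous_on {0<..} (\<lambda>t. ln t + c / t)"
    by (intro continuous_intros) auto
  show "filterlim (\<lambda>t. ln t + c / t) at_top (at_right 0)"
    using assms by real_asymp
qed

lemma poisson_term_lower_bound:
  fixes c t :: real
  assumes c: "0 \<le> c" and t: "0 \<le> t"
  shows "ereal (t / 2 - 2 * c\<^sup>2) \<le> ereal t + neg_T_log c t"
proof (cases "c = 0 \<or> t = 0")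
  case True
  then show ?thesis
    using t by (auto simp: neg_T_log_def)
next
  case False
  then have "0 < c" "0 < t"
    using c t by auto
  have "ln (t / (2 * c)) \<le> t / (2 * c) - 1" "ln (2 * c) \<le> 2 * c - 1"
    using \<open>0 < c\<close> \<open>0 < t\<close> by (intro ln_le_minus_one; simp)+
  moreover have "ln (t / (2 * c)) = ln t - ln (2 * c)"
    using \<open>0 < c\<close> \<open>0 < t\<close> by (simp add: ln_div)
  ultimately have "c * ln t \<le> c * (t / (2 * c) + 2 * c - 2)"
    using \<open>0 < c\<close> by (intro mult_left_mono) auto
  also have "\<dots> = t / 2 + 2 * c\<^sup>2 - 2 * c"
    using \<open>0 < c\<close> by (simp add: field_simps power2_eq_square)
  finally show ?thesis
    using False \<open>0 < c\<close> by (simp add: neg_T_log_def)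
qed

lemma ln_add_div_lower_bound:
  fixes c t :: real
  assumes "0 < c" "0 < t"
  shows "ln c + 1 \<le> ln t + c / t"
proof -
  have "ln (c / t) \<le> c / t - 1"
    using assms by (intro ln_le_minus_one) auto
  moreover have "ln (c / t) = ln c - ln t"
    using assms by (simp add: ln_div)
  ultimately show ?thesis
    by linarith
qed

section \<open>Bounded tensors of nonnegative rank at most r\<close>

lemma tensor_idx_memD: "x \<in> tensor_idx k P \<Longrightarrow> j < k \<Longrightarrow> x j \<in> P j"
  unfolding tensor_idx_def by auto

lemma order_cone_scale:
  assumes "0 \<le> c" "f \<in> order_cone A R"
  shows "(\<lambda>a. c * f a) \<in> order_cone A R"
  using assms unfolding order_cone_def by (auto intro: mult_left_mono)

lemma nonneg_rank_le_nonneg: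
  assumes "\<theta> \<in> nonneg_rank_le k P R r" "x \<in> tensor_idx k P"
  shows "0 \<le> \<theta> x"
proof -
  obtain v :: "nat \<Rightarrow> nat \<Rightarrow> 'a \<Rightarrow> real"
    where "\<forall>i<r. \<forall>j<k. v i j \<in> order_cone (P j) (R j)"
      and "\<theta> x = (\<Sum>i<r. \<Prod>j<k. v i j (x j))"
    using assms unfolding nonneg_rank_le_def by blast
  then show ?thesis
    using tensor_idx_memD[OF assms(2)] unfolding order_cone_def
    by (auto intro!: sum_nonneg prod_nonneg)
qed

lemma const_in_nonneg_rank_le:
  assumes "1 \<le> k" "1 \<le> r" "0 \<le> c"
  shows "(\<lambda>_. c) \<in> nonneg_rank_le k P R r"
proof -
  define v :: "nat \<Rightarrow> nat \<Rightarrow> 'a \<Rightarrow> real"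
    where "v i j a = (if i = 0 \<and> j = 0 then c else if i = 0 then 1 else 0)" for i j a
  have "(\<Prod>j<k. v i j (x j)) = (if i = 0 then c else 0)" for i x
  proof -
    have "(\<Prod>j\<in>{1..<k}. v 0 j (x j)) = 1"
      by (intro prod.neutral) (simp add: v_def)
    then show ?thesis
      using assms(1) by (simp add: v_def lessThan_atLeast0 prod.atLeast_Suc_lessThan)
  qed
  then have "c = (\<Sum>i<r. \<Prod>j<k. v i j (x j))" for x
    using assms(2) by simp
  moreover have "v i j \<in> order_cone (P j) (R j)" for i j
    unfolding order_cone_def v_def using assms(3) by simp
  ultimately show ?thesis
    unfolding nonneg_rank_le_def by blast
qed

text \<open>The r k factor vectors of a decomposition are packed into one function of (i, j, a), so
  that the parameter space carries the product topology.\<close>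

definition rank_sum :: "nat \<Rightarrow> nat \<Rightarrow> (nat \<times> nat \<times> 'a \<Rightarrow> real) \<Rightarrow> (nat \<Rightarrow> 'a) \<Rightarrow> real" where
  "rank_sum k r w x = (\<Sum>i<r. \<Prod>j<k. w (i, j, x j))"

definition bounded_factors ::
  "nat \<Rightarrow> nat \<Rightarrow> (nat \<Rightarrow> 'a set) \<Rightarrow> (nat \<Rightarrow> 'a rel) \<Rightarrow> real \<Rightarrow> (nat \<times> nat \<times> 'a \<Rightarrow> real) set" where
  "bounded_factors k r P R M = {w.
     (\<forall>i<r. \<forall>j<k. (\<lambda>a. w (i, j, a)) \<in> order_cone (P j) (R j) \<and> (\<forall>a\<in>P j. w (i, j, a) \<le> M)) \<and>
     (\<forall>i j a. \<not> (i < r \<and> j < k \<and> a \<in> P j) \<longrightarrow> w (i, j, a) = 0)}"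

lemma compact_bounded_factors: "compact (bounded_factors k r P R M)"
proof -
  define S where "S = (\<lambda>(i, j, a). if i < r \<and> j < k \<and> a \<in> P j then {0..M} else {0 :: real})"
  define C where "C = {w :: nat \<times> nat \<times> 'a \<Rightarrow> real. \<forall>i j a b. i < r \<longrightarrow> j < k \<longrightarrow> a \<in> P j \<longrightarrow> b \<in> P j \<longrightarrow> (a, b) \<in> R j
                           \<longrightarrow> w (i, j, a) \<le> w (i, j, b)}"
  have "bounded_factors k r P R M = PiE UNIV S \<inter> C"
    unfolding bounded_factors_def order_cone_def C_def S_def
    by (auto simp: PiE_iff split: if_splits)
  moreover have "compactin (product_topology (\<lambda>_. euclidean) UNIV) (PiE UNIV S)"
    by (subst compactin_PiE) (auto simp: S_def)
  then have "compact (PiE UNIV S)"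
    by (simp add: euclidean_product_topology)
  moreover have "closed C"
    unfolding C_def by (intro closed_Collect_all closed_Collect_imp closed_Collect_le
        continuous_on_product_coordinates) auto
  ultimately show ?thesis
    by (simp add: compact_Int_closed)
qed

lemma continuous_rank_sum: "continuous_on UNIV (rank_sum k r)"
  unfolding rank_sum_def[abs_def]
  by (intro continuous_on_coordinatewise_then_product continuous_intros
      continuous_on_product_coordinates)

lemma rank_sum_in_nonneg_rank_le:
  assumes "w \<in> bounded_factors k r P R M"
  shows "rank_sum k r w \<in> nonneg_rank_le k P R r"
  using assms unfolding nonneg_rank_le_def rank_sum_def bounded_factors_def
  by (intro CollectI exI[of _ "\<lambda>i j a. w (i, j, a)"]) simp

lemma closed_prob_simplex: "closed (prob_simplex k P)"
  unfolding prob_simplex_def Ball_def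
  by (intro closed_Collect_conj closed_Collect_all closed_Collect_imp closed_Collect_le
      closed_Collect_eq continuous_intros continuous_on_product_coordinates) auto

context
  fixes k :: nat and P :: "nat \<Rightarrow> 'a set"
  assumes k: "1 \<le> k"
    and fin: "\<And>j. j < k \<Longrightarrow> finite (P j)"
    and ne: "\<And>j. j < k \<Longrightarrow> P j \<noteq> {}"
begin

lemma finite_tensor_idx: "finite (tensor_idx k P)"
  unfolding tensor_idx_def using fin by (intro finite_PiE) auto

lemma tensor_idx_nonempty: "tensor_idx k P \<noteq> {}"
  unfolding tensor_idx_def using ne by (simp add: PiE_eq_empty_iff)

lemma prod_lessThan_split_first: "(\<Prod>j<k. f j) = f 0 * (\<Prod>j\<in>{1..<k}. f j)"
  using k by (simp add: lessThan_atLeast0 prod.atLeast_Suc_lessThan)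

text \<open>Factor j \<ge> 1 is divided by its maximum m j and factor 0 is multiplied by the product of
  these maxima.  If some m j is 0 then 1 / m j = 0, but then the rank-one tensor vanishes anyway.\<close>

lemma rank_one_normalization:
  fixes v :: "nat \<Rightarrow> 'a \<Rightarrow> real"
  assumes v: "\<And>j. j < k \<Longrightarrow> v j \<in> order_cone (P j) (R j)"
    and bound: "\<And>x. x \<in> tensor_idx k P \<Longrightarrow> (\<Prod>j<k. v j (x j)) \<le> M" and M: "1 \<le> M"
  obtains u where "\<And>j. j < k \<Longrightarrow> u j \<in> order_cone (P j) (R j)"
    and "\<And>j a. j < k \<Longrightarrow> a \<in> P j \<Longrightarrow> u j a \<le> M"
    and "\<And>x. x \<in> tensor_idx k P \<Longrightarrow> (\<Prod>j<k. u j (x j)) = (\<Prod>j<k. v j (x j))"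
proof -
  define m where "m j = Max (v j ` P j)" for j
  have v_nonneg: "0 \<le> v j a" if "j < k" "a \<in> P j" for j a
    using v that unfolding order_cone_def by blast
  have v_le_max: "v j a \<le> m j" if "j < k" "a \<in> P j" for j a
    unfolding m_def using fin that by (intro Max_ge) auto
  have "m j \<in> v j ` P j" if "j < k" for j
    unfolding m_def using fin ne that by (intro Max_in) auto
  then have "\<exists>b. j < k \<longrightarrow> b \<in> P j \<and> v j b = m j" for j
    by (cases "j < k") force+
  then obtain y where y: "\<And>j. j < k \<Longrightarrow> y j \<in> P j \<and> v j (y j) = m j"
    by metis
  have m_nonneg: "0 \<le> m j" if "j < k" for j
    using v_nonneg[of j "y j"] y[OF that] that by simp
  define s where "s j = (if j = 0 then \<Prod>i\<in>{1..<k}. m i else 1 / m j)" for j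
  have s_nonneg: "0 \<le> s j" if "j < k" for j
    using m_nonneg that unfolding s_def by (auto intro!: prod_nonneg)
  show thesis
  proof (rule that)
    show "(\<lambda>a. s j * v j a) \<in> order_cone (P j) (R j)" if "j < k" for j
      using that by (intro order_cone_scale s_nonneg v)
    show "s j * v j a \<le> M" if j: "j < k" "a \<in> P j" for j a
    proof (cases "j = 0")
      case True
      define x where "x = restrict (y(0 := a)) {..<k}"
      have x: "x \<in> tensor_idx k P"
        unfolding tensor_idx_def x_def using y j True by auto
      have "s j * v j a = (\<Prod>i<k. v i (x i))"
        unfolding prod_lessThan_split_first[of "\<lambda>i. v i (x i)"] using True y k
        by (simp add: s_def x_def)
      also have "\<dots> \<le> M"
        using bound x .
      finally show ?thesis .
    next
      case False
      have "s j * v j a = v j a / m j"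
        using False by (simp add: s_def)
      also have "\<dots> \<le> 1"
        using v_le_max[OF j] v_nonneg[OF j] by (auto simp: divide_le_eq_1)
      finally show ?thesis
        using M by linarith
    qed
    show "(\<Prod>j<k. s j * v j (x j)) = (\<Prod>j<k. v j (x j))" if x: "x \<in> tensor_idx k P" for x
    proof (cases "\<exists>j\<in>{1..<k}. m j = 0")
      case True
      then obtain j where j: "j \<in> {1..<k}" "m j = 0"
        by blast
      then have "v j (x j) = 0"
        using v_nonneg[of j "x j"] v_le_max[of j "x j"] tensor_idx_memD[OF x, of j] by simp
      then have "(\<Prod>j<k. v j (x j)) = 0" "(\<Prod>j<k. s j * v j (x j)) = 0"
        using j by (auto simp: prod_zero_iff intro!: bexI[of _ j])
      then show ?thesis
        by (simp only:)
    next
      case False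
      have "(\<Prod>j<k. s j) = (\<Prod>i\<in>{1..<k}. m i * (1 / m i))"
        unfolding prod_lessThan_split_first[of s] prod.distrib by (simp add: s_def)
      also have "\<dots> = 1"
        using False by (intro prod.neutral) auto
      finally show ?thesis
        by (simp add: prod.distrib)
    qed
  qed
qed

lemma nonneg_rank_le_bounded_factorization:
  assumes \<theta>: "\<theta> \<in> nonneg_rank_le k P R r"
    and bound: "\<And>x. x \<in> tensor_idx k P \<Longrightarrow> \<theta> x \<le> M" and M: "1 \<le> M"
  obtains w where "w \<in> bounded_factors k r P R M"
    and "\<And>x. x \<in> tensor_idx k P \<Longrightarrow> rank_sum k r w x = \<theta> x"
proof -
  obtain v :: "nat \<Rightarrow> nat \<Rightarrow> 'a \<Rightarrow> real"
    where v: "\<And>i j. i < r \<Longrightarrow> j < k \<Longrightarrow> v i j \<in> order_cone (P j) (R j)"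
      and \<theta>_eq: "\<And>x. x \<in> tensor_idx k P \<Longrightarrow> \<theta> x = (\<Sum>i<r. \<Prod>j<k. v i j (x j))"
    using \<theta> unfolding nonneg_rank_le_def by blast
  have term_le: "(\<Prod>j<k. v i j (x j)) \<le> M" if "i < r" "x \<in> tensor_idx k P" for i x
  proof -
    have "(\<Prod>j<k. v i j (x j)) \<le> (\<Sum>i<r. \<Prod>j<k. v i j (x j))"
      using that v tensor_idx_memD[OF that(2)]
      by (intro member_le_sum prod_nonneg) (auto simp: order_cone_def)
    then show ?thesis
      using \<theta>_eq[OF that(2)] bound[OF that(2)] by linarith
  qed
  have "\<forall>i. \<exists>u. i < r \<longrightarrow> (\<forall>j<k. u j \<in> order_cone (P j) (R j)) \<and> (\<forall>j<k. \<forall>a\<in>P j. u j a \<le> M) \<and>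
          (\<forall>x\<in>tensor_idx k P. (\<Prod>j<k. u j (x j)) = (\<Prod>j<k. v i j (x j)))"
  proof
    fix i
    show "\<exists>u. i < r \<longrightarrow> (\<forall>j<k. u j \<in> order_cone (P j) (R j)) \<and> (\<forall>j<k. \<forall>a\<in>P j. u j a \<le> M) \<and>
          (\<forall>x\<in>tensor_idx k P. (\<Prod>j<k. u j (x j)) = (\<Prod>j<k. v i j (x j)))"
    proof (cases "i < r")
      case True
      obtain u where "\<And>j. j < k \<Longrightarrow> u j \<in> order_cone (P j) (R j)"
        "\<And>j a. j < k \<Longrightarrow> a \<in> P j \<Longrightarrow> u j a \<le> M"
        "\<And>x. x \<in> tensor_idx k P \<Longrightarrow> (\<Prod>j<k. u j (x j)) = (\<Prod>j<k. v i j (x j))"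
        by (rule rank_one_normalization[of "v i" R M]) (use True v term_le M in auto)
      then show ?thesis
        by blast
    qed simp
  qed
  then obtain u where u_cone: "\<And>i j. i < r \<Longrightarrow> j < k \<Longrightarrow> u i j \<in> order_cone (P j) (R j)"
    and u_le: "\<And>i j a. i < r \<Longrightarrow> j < k \<Longrightarrow> a \<in> P j \<Longrightarrow> u i j a \<le> M"
    and u_prod: "\<And>i x. i < r \<Longrightarrow> x \<in> tensor_idx k P \<Longrightarrow> (\<Prod>j<k. u i j (x j)) = (\<Prod>j<k. v i j (x j))"
    by (metis choice)
  define w where "w = (\<lambda>(i, j, a). if i < r \<and> j < k \<and> a \<in> P j then u i j a else 0)"
  show thesis
  proof (rule that)
    have "(\<lambda>a. w (i, j, a)) \<in> order_cone (P j) (R j)" if "i < r" "j < k" for i j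
      using u_cone[OF that] that unfolding order_cone_def w_def by simp
    then show "w \<in> bounded_factors k r P R M"
      unfolding bounded_factors_def using u_le by (simp add: w_def)
    show "rank_sum k r w x = \<theta> x" if x: "x \<in> tensor_idx k P" for x
    proof -
      have "(\<Prod>j<k. w (i, j, x j)) = (\<Prod>j<k. v i j (x j))" if "i < r" for i
        using u_prod[OF that x] tensor_idx_memD[OF x] that by (simp add: w_def)
      then show ?thesis
        unfolding rank_sum_def \<theta>_eq[OF x] by simp
    qed
  qed
qed

text \<open>The constraint set S lets the same argument handle the multinomial problem.\<close>

lemma has_minimizer_nonneg_rank_le:
  fixes g :: "(nat \<Rightarrow> 'a) \<Rightarrow> real \<Rightarrow> ereal" and F :: "((nat \<Rightarrow> 'a) \<Rightarrow> real) \<Rightarrow> ereal"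
  assumes F: "\<And>\<theta>. F \<theta> = (\<Sum>x\<in>tensor_idx k P. g x (\<theta> x))"
    and g_cont: "\<And>x. x \<in> tensor_idx k P \<Longrightarrow> continuous_on {0..} (g x)"
    and g_fin: "\<And>x t. x \<in> tensor_idx k P \<Longrightarrow> g x t \<noteq> -\<infinity>"
    and S_closed: "closed S"
    and S_local: "\<And>\<theta> \<theta>'. \<theta> \<in> S \<Longrightarrow> (\<And>x. x \<in> tensor_idx k P \<Longrightarrow> \<theta>' x = \<theta> x) \<Longrightarrow> \<theta>' \<in> S"
    and \<theta>\<^sub>0: "\<theta>\<^sub>0 \<in> nonneg_rank_le k P R r \<inter> S" "\<And>x. x \<in> tensor_idx k P \<Longrightarrow> \<theta>\<^sub>0 x \<le> M"
    and coercive: "\<And>\<theta> x. \<theta> \<in> nonneg_rank_le k P R r \<inter> S \<Longrightarrow> x \<in> tensor_idx k P \<Longrightarrow> M < \<theta> x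
                     \<Longrightarrow> F \<theta>\<^sub>0 \<le> F \<theta>"
  shows "has_minimizer F (nonneg_rank_le k P R r \<inter> S)"
proof -
  define M' where "M' = max M 1"
  define K where "K = bounded_factors k r P R M' \<inter> rank_sum k r -` S"
  have represented: "\<exists>w\<in>K. F (rank_sum k r w) = F \<theta>"
    if \<theta>: "\<theta> \<in> nonneg_rank_le k P R r \<inter> S" "\<And>x. x \<in> tensor_idx k P \<Longrightarrow> \<theta> x \<le> M'" for \<theta>
  proof -
    obtain w where w: "w \<in> bounded_factors k r P R M'"
      and agree: "\<And>x. x \<in> tensor_idx k P \<Longrightarrow> rank_sum k r w x = \<theta> x"
      by (rule nonneg_rank_le_bounded_factorization[of \<theta> R r M']) (use \<theta> in \<open>auto simp: M'_def\<close>)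
    have "rank_sum k r w \<in> S"
      using \<theta>(1) by (intro S_local[OF _ agree]) simp
    then have "w \<in> K"
      unfolding K_def using w by simp
    moreover have "F (rank_sum k r w) = F \<theta>"
      unfolding F using agree by simp
    ultimately show ?thesis
      by blast
  qed
  have \<theta>\<^sub>0_represented: "\<exists>w\<in>K. F (rank_sum k r w) = F \<theta>\<^sub>0"
    using \<theta>\<^sub>0 by (intro represented) (auto simp: M'_def le_max_iff_disj)
  show ?thesis
  proof (rule has_minimizer_of_compact_parametrization[of K _ "rank_sum k r"])
    show "compact K"
      unfolding K_def using compact_bounded_factors closed_vimage[OF S_closed continuous_rank_sum]
      by (rule compact_Int_closed)
    show "K \<noteq> {}"
      using \<theta>\<^sub>0_represented by blast
    show "rank_sum k r ` K \<subseteq> nonneg_rank_le k P R r \<inter> S"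
      unfolding K_def by (auto intro: rank_sum_in_nonneg_rank_le)
    have "continuous_on K (\<lambda>w. g x (rank_sum k r w x))" if x: "x \<in> tensor_idx k P" for x
    proof (rule continuous_on_compose2[OF g_cont[OF x]])
      show "continuous_on K (\<lambda>w. rank_sum k r w x)"
        using continuous_on_product_then_coordinatewise[OF continuous_rank_sum]
        by (rule continuous_on_subset) simp
      show "(\<lambda>w. rank_sum k r w x) ` K \<subseteq> {0..}"
        unfolding K_def using nonneg_rank_le_nonneg[OF rank_sum_in_nonneg_rank_le x] by auto
    qed
    then show "continuous_on K (\<lambda>w. F (rank_sum k r w))"
      unfolding F using g_fin by (intro continuous_on_sum_ereal)
    show "\<exists>w\<in>K. F (rank_sum k r w) \<le> F \<theta>" if \<theta>: "\<theta> \<in> nonneg_rank_le k P R r \<inter> S" for \<theta>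
    proof (cases "\<forall>x\<in>tensor_idx k P. \<theta> x \<le> M'")
      case True
      then obtain w where "w \<in> K" "F (rank_sum k r w) = F \<theta>"
        using represented[OF \<theta>] by blast
      then show ?thesis
        by (intro bexI[of _ w]) simp
    next
      case False
      then obtain x where "x \<in> tensor_idx k P" "M < \<theta> x"
        unfolding M'_def by auto
      then have "F \<theta>\<^sub>0 \<le> F \<theta>"
        using coercive[OF \<theta>] by blast
      moreover obtain w where "w \<in> K" "F (rank_sum k r w) = F \<theta>\<^sub>0"
        using \<theta>\<^sub>0_represented by blast
      ultimately show ?thesis
        by (intro bexI[of _ w]) simp
    qed
  qed
qed

section \<open>The four estimation problems\<close>

lemma gauss_obj_coercive:
  assumes x0: "x0 \<in> tensor_idx k P"
    and far: "(\<Sum>x\<in>tensor_idx k P. \<bar>T x\<bar>) + (\<Sum>x\<in>tensor_idx k P. (T x)\<^sup>2) + 1 < \<theta> x0"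
  shows "gauss_obj k P T (\<lambda>_. 0) \<le> gauss_obj k P T \<theta>"
proof -
  define B where "B = (\<Sum>x\<in>tensor_idx k P. (T x)\<^sup>2)"
  have "\<bar>T x0\<bar> \<le> (\<Sum>x\<in>tensor_idx k P. \<bar>T x\<bar>)"
    using finite_tensor_idx x0 by (intro member_le_sum) auto
  moreover have "0 \<le> B"
    unfolding B_def by (intro sum_nonneg) auto
  ultimately have "B + 1 \<le> \<theta> x0 - T x0"
    using far unfolding B_def by linarith
  then have "B \<le> (\<theta> x0 - T x0) * 1" "(\<theta> x0 - T x0) * 1 \<le> (\<theta> x0 - T x0) * (\<theta> x0 - T x0)"
    using \<open>0 \<le> B\<close> by (auto intro!: mult_left_mono)
  then have "B \<le> (T x0 - \<theta> x0)\<^sup>2"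
    by (simp add: power2_eq_square algebra_simps)
  also have "\<dots> \<le> (\<Sum>x\<in>tensor_idx k P. (T x - \<theta> x)\<^sup>2)"
    using finite_tensor_idx x0 by (intro member_le_sum) auto
  finally show ?thesis
    by (simp add: gauss_obj_def B_def)
qed

lemma gauss_obj_has_minimizer:
  assumes "1 \<le> r"
  shows "has_minimizer (gauss_obj k P T) (nonneg_rank_le k P R r)"
proof -
  have "has_minimizer (gauss_obj k P T) (nonneg_rank_le k P R r \<inter> UNIV)"
  proof (rule has_minimizer_nonneg_rank_le[where g = "\<lambda>x t. ereal ((T x - t)\<^sup>2)" and \<theta>\<^sub>0 = "\<lambda>_. 0"
        and M = "(\<Sum>x\<in>tensor_idx k P. \<bar>T x\<bar>) + (\<Sum>x\<in>tensor_idx k P. (T x)\<^sup>2) + 1"])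
    show "(\<lambda>_. 0) \<in> nonneg_rank_le k P R r \<inter> UNIV"
      using const_in_nonneg_rank_le[OF k assms, where c = 0] by simp
    show "0 \<le> (\<Sum>x\<in>tensor_idx k P. \<bar>T x\<bar>) + (\<Sum>x\<in>tensor_idx k P. (T x)\<^sup>2) + 1"
      by (simp add: add_nonneg_nonneg sum_nonneg)
    show "gauss_obj k P T \<theta> = (\<Sum>x\<in>tensor_idx k P. ereal ((T x - \<theta> x)\<^sup>2))" for \<theta>
      by (simp add: gauss_obj_def)
    show "continuous_on {0..} (\<lambda>t. ereal ((T x - t)\<^sup>2))" for x
      by (intro continuous_intros)
    show "gauss_obj k P T (\<lambda>_. 0) \<le> gauss_obj k P T \<theta>"
      if "x \<in> tensor_idx k P"
        "(\<Sum>x\<in>tensor_idx k P. \<bar>T x\<bar>) + (\<Sum>x\<in>tensor_idx k P. (T x)\<^sup>2) + 1 < \<theta> x" for \<theta> x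
      using that by (rule gauss_obj_coercive)
  qed simp_all
  then show ?thesis
    by simp
qed

lemma multinom_obj_has_minimizer:
  assumes "1 \<le> r" and T_nonneg: "\<And>x. x \<in> tensor_idx k P \<Longrightarrow> 0 \<le> T x"
  shows "has_minimizer (multinom_obj k P T) (nonneg_rank_le k P R r \<inter> prob_simplex k P)"
proof (rule has_minimizer_nonneg_rank_le[where g = "\<lambda>x. neg_T_log (T x)"
      and \<theta>\<^sub>0 = "\<lambda>_. 1 / card (tensor_idx k P)" and M = 1])
  show "multinom_obj k P T \<theta> = (\<Sum>x\<in>tensor_idx k P. neg_T_log (T x) (\<theta> x))" for \<theta>
    by (simp add: multinom_obj_def)
  show "continuous_on {0..} (neg_T_log (T x))" if "x \<in> tensor_idx k P" for x
    using that by (intro continuous_on_neg_T_log T_nonneg)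
  show "neg_T_log (T x) t \<noteq> -\<infinity>" for x t
    by (simp add: neg_T_log_def)
  show "closed (prob_simplex k P)"
    by (rule closed_prob_simplex)
  show "\<theta>' \<in> prob_simplex k P"
    if "\<theta> \<in> prob_simplex k P" "\<And>x. x \<in> tensor_idx k P \<Longrightarrow> \<theta>' x = \<theta> x" for \<theta> \<theta>'
    using that by (simp add: prob_simplex_def)
  have card: "0 < card (tensor_idx k P)"
    using finite_tensor_idx tensor_idx_nonempty by (simp add: card_gt_0_iff)
  then show "(\<lambda>_. 1 / card (tensor_idx k P)) \<in> nonneg_rank_le k P R r \<inter> prob_simplex k P"
    using const_in_nonneg_rank_le[OF k assms(1), where c = "1 / card (tensor_idx k P)"]
    by (simp add: prob_simplex_def)
  show "1 / card (tensor_idx k P) \<le> 1"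
    using card by (simp add: divide_le_eq_1)
  show "multinom_obj k P T (\<lambda>_. 1 / card (tensor_idx k P)) \<le> multinom_obj k P T \<theta>"
    if "\<theta> \<in> nonneg_rank_le k P R r \<inter> prob_simplex k P" "x \<in> tensor_idx k P" "1 < \<theta> x" for \<theta> x
  proof -
    have "\<theta> x \<le> (\<Sum>x\<in>tensor_idx k P. \<theta> x)"
      using that finite_tensor_idx by (intro member_le_sum) (auto simp: prob_simplex_def)
    then show ?thesis
      using that by (simp add: prob_simplex_def)
  qed
qed

lemma poisson_obj_coercive:
  assumes x0: "x0 \<in> tensor_idx k P"
    and T_nonneg: "\<And>x. x \<in> tensor_idx k P \<Longrightarrow> 0 \<le> T x"
    and \<theta>_nonneg: "\<And>x. x \<in> tensor_idx k P \<Longrightarrow> 0 \<le> \<theta> x"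
    and far: "2 * real (card (tensor_idx k P)) + 4 * (\<Sum>x\<in>tensor_idx k P. (T x)\<^sup>2) < \<theta> x0"
  shows "poisson_obj k P T (\<lambda>_. 1) \<le> poisson_obj k P T \<theta>"
proof -
  have "\<theta> x0 \<le> (\<Sum>x\<in>tensor_idx k P. \<theta> x)"
    using finite_tensor_idx x0 \<theta>_nonneg by (intro member_le_sum) auto
  moreover have "(\<Sum>x\<in>tensor_idx k P. \<theta> x / 2 - 2 * (T x)\<^sup>2)
      = (\<Sum>x\<in>tensor_idx k P. \<theta> x) / 2 - 2 * (\<Sum>x\<in>tensor_idx k P. (T x)\<^sup>2)"
    by (simp add: sum_subtractf sum_divide_distrib sum_distrib_left)
  ultimately have "real (card (tensor_idx k P)) \<le> (\<Sum>x\<in>tensor_idx k P. \<theta> x / 2 - 2 * (T x)\<^sup>2)"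
    using far by linarith
  moreover have "neg_T_log c 1 = 0" for c
    by (simp add: neg_T_log_def zero_ereal_def)
  ultimately have "poisson_obj k P T (\<lambda>_. 1) \<le> (\<Sum>x\<in>tensor_idx k P. ereal (\<theta> x / 2 - 2 * (T x)\<^sup>2))"
    by (simp add: poisson_obj_def)
  also have "\<dots> \<le> poisson_obj k P T \<theta>"
    unfolding poisson_obj_def using T_nonneg \<theta>_nonneg
    by (intro sum_mono poisson_term_lower_bound)
  finally show ?thesis .
qed

lemma poisson_obj_has_minimizer:
  assumes "1 \<le> r" and T_nonneg: "\<And>x. x \<in> tensor_idx k P \<Longrightarrow> 0 \<le> T x"
  shows "has_minimizer (poisson_obj k P T) (nonneg_rank_le k P R r)"
proof -
  have "has_minimizer (poisson_obj k P T) (nonneg_rank_le k P R r \<inter> UNIV)"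
  proof (rule has_minimizer_nonneg_rank_le[where g = "\<lambda>x t. ereal t + neg_T_log (T x) t"
        and \<theta>\<^sub>0 = "\<lambda>_. 1"
        and M = "2 * real (card (tensor_idx k P)) + 4 * (\<Sum>x\<in>tensor_idx k P. (T x)\<^sup>2) + 1"])
    show "(\<lambda>_. 1) \<in> nonneg_rank_le k P R r \<inter> UNIV"
      using const_in_nonneg_rank_le[OF k assms(1), where c = 1] by simp
    show "1 \<le> 2 * real (card (tensor_idx k P)) + 4 * (\<Sum>x\<in>tensor_idx k P. (T x)\<^sup>2) + 1"
      by (simp add: sum_nonneg)
    show "poisson_obj k P T (\<lambda>_. 1) \<le> poisson_obj k P T \<theta>"
      if "\<theta> \<in> nonneg_rank_le k P R r \<inter> UNIV" "x \<in> tensor_idx k P"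
        "2 * real (card (tensor_idx k P)) + 4 * (\<Sum>x\<in>tensor_idx k P. (T x)\<^sup>2) + 1 < \<theta> x" for \<theta> x
      using that by (intro poisson_obj_coercive[OF _ T_nonneg] nonneg_rank_le_nonneg) auto
    show "poisson_obj k P T \<theta> = (\<Sum>x\<in>tensor_idx k P. ereal (\<theta> x) + neg_T_log (T x) (\<theta> x))"
      for \<theta>
      by (simp add: poisson_obj_def)
    show "continuous_on {0..} (\<lambda>t. ereal t + neg_T_log (T x) t)" if "x \<in> tensor_idx k P" for x
      using that by (intro continuous_on_poisson_term T_nonneg)
    show "ereal t + neg_T_log (T x) t \<noteq> -\<infinity>" for x t
      by (simp add: neg_T_log_def)
  qed simp_all
  then show ?thesis
    by simp
qed

lemma expon_obj_coercive:
  assumes x0: "x0 \<in> tensor_idx k P"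
    and T_pos: "\<And>x. x \<in> tensor_idx k P \<Longrightarrow> 0 < T x"
    and \<theta>_nonneg: "\<And>x. x \<in> tensor_idx k P \<Longrightarrow> 0 \<le> \<theta> x"
    and far: "exp ((\<Sum>x\<in>tensor_idx k P. T x) + (\<Sum>x\<in>tensor_idx k P. \<bar>ln (T x) + 1\<bar>)) < \<theta> x0"
  shows "expon_obj k P T (\<lambda>_. 1) \<le> expon_obj k P T \<theta>"
proof -
  define I where "I = tensor_idx k P"
  define g where "g x t = (if t = 0 then \<infinity> else ereal (ln t + T x / t))" for x t
  have obj: "expon_obj k P T \<theta>' = (\<Sum>x\<in>I. g x (\<theta>' x))" for \<theta>'
    unfolding expon_obj_def g_def I_def ..
  have "0 < \<theta> x0"
    using far by (meson exp_gt_zero order_less_trans)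
  have "(\<Sum>x\<in>I. T x) + (\<Sum>x\<in>I. \<bar>ln (T x) + 1\<bar>) < ln (\<theta> x0)"
    using far \<open>0 < \<theta> x0\<close> unfolding I_def by (metis exp_less_cancel_iff exp_ln)
  then have "(\<Sum>x\<in>I. T x) \<le> ln (\<theta> x0) + (\<Sum>x\<in>I - {x0}. ln (T x) + 1)"
    using sum_mono2[of I "I - {x0}" "\<lambda>x. \<bar>ln (T x) + 1\<bar>"] finite_tensor_idx
      sum_mono[of "I - {x0}" "\<lambda>x. - \<bar>ln (T x) + 1\<bar>" "\<lambda>x. ln (T x) + 1"]
    unfolding I_def by (force simp: sum_negf)
  also have "ereal \<dots> \<le> g x0 (\<theta> x0) + (\<Sum>x\<in>I - {x0}. g x (\<theta> x))"
  proof -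
    have "ln (\<theta> x0) \<le> g x0 (\<theta> x0)"
      using \<open>0 < \<theta> x0\<close> T_pos[OF x0] by (simp add: g_def)
    moreover have "ereal (ln (T x) + 1) \<le> g x (\<theta> x)" if "x \<in> I - {x0}" for x
      using ln_add_div_lower_bound[OF T_pos, of x "\<theta> x"] \<theta>_nonneg[of x] that
      unfolding I_def g_def by (cases "\<theta> x = 0") auto
    then have "(\<Sum>x\<in>I - {x0}. ereal (ln (T x) + 1)) \<le> (\<Sum>x\<in>I - {x0}. g x (\<theta> x))"
      by (rule sum_mono)
    ultimately have "ereal (ln (\<theta> x0)) + (\<Sum>x\<in>I - {x0}. ereal (ln (T x) + 1))
        \<le> g x0 (\<theta> x0) + (\<Sum>x\<in>I - {x0}. g x (\<theta> x))"
      by (rule add_mono)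
    then show ?thesis
      by simp
  qed
  also have "\<dots> = expon_obj k P T \<theta>"
    unfolding obj using finite_tensor_idx x0 unfolding I_def by (simp add: sum.remove)
  finally show ?thesis
    by (simp add: obj g_def)
qed

lemma expon_obj_has_minimizer:
  assumes "1 \<le> r" and T_pos: "\<And>x. x \<in> tensor_idx k P \<Longrightarrow> 0 < T x"
  shows "has_minimizer (expon_obj k P T) (nonneg_rank_le k P R r)"
proof -
  have "has_minimizer (expon_obj k P T) (nonneg_rank_le k P R r \<inter> UNIV)"
  proof (rule has_minimizer_nonneg_rank_le[where g = "\<lambda>x t. if t = 0 then \<infinity> else ereal (ln t + T x / t)"
        and \<theta>\<^sub>0 = "\<lambda>_. 1"
        and M = "exp ((\<Sum>x\<in>tensor_idx k P. T x) + (\<Sum>x\<in>tensor_idx k P. \<bar>ln (T x) + 1\<bar>))"])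
    show "(\<lambda>_. 1) \<in> nonneg_rank_le k P R r \<inter> UNIV"
      using const_in_nonneg_rank_le[OF k assms(1), where c = 1] by simp
    show "1 \<le> exp ((\<Sum>x\<in>tensor_idx k P. T x) + (\<Sum>x\<in>tensor_idx k P. \<bar>ln (T x) + 1\<bar>))"
      using T_pos by (simp add: sum_nonneg less_imp_le)
    show "expon_obj k P T (\<lambda>_. 1) \<le> expon_obj k P T \<theta>"
      if "\<theta> \<in> nonneg_rank_le k P R r \<inter> UNIV" "x \<in> tensor_idx k P"
        "exp ((\<Sum>x\<in>tensor_idx k P. T x) + (\<Sum>x\<in>tensor_idx k P. \<bar>ln (T x) + 1\<bar>)) < \<theta> x" for \<theta> x
      using that by (intro expon_obj_coercive[OF _ T_pos] nonneg_rank_le_nonneg) auto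
    show "expon_obj k P T \<theta> = (\<Sum>x\<in>tensor_idx k P.
        (\<lambda>x t. if t = 0 then \<infinity> else ereal (ln t + T x / t)) x (\<theta> x))" for \<theta>
      by (simp add: expon_obj_def)
    show "continuous_on {0..} (\<lambda>t. if t = 0 then \<infinity> else ereal (ln t + T x / t))"
      if "x \<in> tensor_idx k P" for x
      using that by (intro continuous_on_expon_term T_pos)
  qed simp_all
  then show ?thesis
    by simp
qed

end

theorem lemma9:
  fixes k r :: nat and P :: "nat \<Rightarrow> 'a set" and R :: "nat \<Rightarrow> 'a rel"
    and T :: "(nat \<Rightarrow> 'a) \<Rightarrow> real"
  assumes k: "k \<ge> 1" and r: "r \<ge> 1"
    and fin: "\<And>j. j < k \<Longrightarrow> finite (P j)"
    and ne: "\<And>j. j < k \<Longrightarrow> P j \<noteq> {}"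
    and po: "\<And>j. j < k \<Longrightarrow> partial_order_on (P j) (R j)"
  shows "has_minimizer (gauss_obj k P T) (nonneg_rank_le k P R r)
    \<and> (\<forall>n::nat. (\<forall>x\<in>tensor_idx k P. T x \<in> \<nat>) \<and> (\<Sum>x\<in>tensor_idx k P. T x) = real n \<longrightarrow>
          has_minimizer (multinom_obj k P T) (nonneg_rank_le k P R r \<inter> prob_simplex k P))
    \<and> ((\<forall>x\<in>tensor_idx k P. T x \<in> \<nat>) \<longrightarrow>
          has_minimizer (poisson_obj k P T) (nonneg_rank_le k P R r))
    \<and> ((\<forall>x\<in>tensor_idx k P. 0 < T x) \<longrightarrow>
          has_minimizer (expon_obj k P T) (nonneg_rank_le k P R r))"
proof -
  \<comment> \<open>Neither the order relations nor the sample size n play a role: the arguments only use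
    that order cones are closed cones, and that counts are nonnegative.\<close>
  have T_nonneg: "0 \<le> T x" if "\<forall>x\<in>tensor_idx k P. T x \<in> \<nat>" "x \<in> tensor_idx k P" for x
    using that by (metis Nats_cases of_nat_0_le_iff)
  show ?thesis
    using gauss_obj_has_minimizer[of k P, OF k fin ne r]
      multinom_obj_has_minimizer[of k P, OF k fin ne r]
      poisson_obj_has_minimizer[of k P, OF k fin ne r]
      expon_obj_has_minimizer[of k P, OF k fin ne r] T_nonneg
    by blast
qed

end
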